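(* Let $A \in \mathbb{R}^{m \times r}$ and $B \in \mathbb{R}^{r \times n}$, and for $\kappa\in\mathbb{R}^r_+$ let $f_\kappa\colon\mathbb{R}^n_+\to\mathbb{R}^m$, $f_\kappa(x)=A_\kappa x^B$. The following are equivalent: (i) $f_\kappa$ is injective on $\mathbb{R}^n_+$ for all $\kappa\in\mathbb{R}^r_+$; (ii) $\ker(B)=\{0\}$ and $\sigma(\ker(A)) \cap \sigma(\mathrm{im}(B)) = \{0\}$.
   Context: $\mathbb{R}_+$ denotes the strictly positive reals. $(x^B)_j=\prod_i x_i^{b_{ji}}$ (real exponents), $A_\kappa=A\,\mathrm{diag}(\kappa)$. $\sigma$ denotes the componentwise sign vector in $\{-,0,+\}^k$, $\sigma(T)=\{\sigma(x)\mid x\in T\}$, and $0$ in (ii) denotes the zero sign vector. *)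

theory Defs
  imports "HOL-Analysis.Analysis"
begin

definition monomial_map :: "real^'n^'r \<Rightarrow> real^'n \<Rightarrow> real^'r" where
  "monomial_map B x = (\<chi> j. \<Prod>i\<in>UNIV. (x $ i) powr (B $ j $ i))"

text \<open>f_kappa(x) = A diag(kappa) x^B.\<close>
definition gen_mass_action :: "real^'r^'m \<Rightarrow> real^'n^'r \<Rightarrow> real^'r \<Rightarrow> real^'n \<Rightarrow> real^'m" where
  "gen_mass_action A B \<kappa> x = A *v (\<chi> j. \<kappa> $ j * monomial_map B x $ j)"

definition pos_orthant :: "(real^'k) set" where
  "pos_orthant = {x. \<forall>i. 0 < x $ i}"

definition sign_vec :: "real^'k \<Rightarrow> real^'k" where
  "sign_vec v = (\<chi> i. sgn (v $ i))"

definition mat_ker :: "real^'c^'l \<Rightarrow> (real^'c) set" where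
  "mat_ker M = {v. M *v v = 0}"

definition mat_im :: "real^'c^'l \<Rightarrow> (real^'l) set" where
  "mat_im M = range (\<lambda>v. M *v v)"

end

theory Submission
  imports Defs
begin

text \<open>In logarithmic coordinates \<open>x = exp z\<close> the monomial map becomes \<open>z \<mapsto> exp (B z)\<close>,
so \<open>f\<^sub>\<kappa>(exp a) = f\<^sub>\<kappa>(exp b)\<close> says exactly that \<open>v = \<kappa> \<circ> (exp (B a) - exp (B b))\<close>
lies in \<open>ker A\<close>. As \<open>exp\<close> is increasing and \<open>\<kappa> > 0\<close>, \<open>v\<close> has the sign vector of
\<open>B (a - b) \<in> im B\<close>. Conversely, any \<open>v\<close> with the sign vector of some \<open>u = B w\<close> arises
this way from \<open>a = w\<close>, \<open>b = 0\<close> and \<open>\<kappa>\<^sub>j = v\<^sub>j / (exp u\<^sub>j - 1)\<close> (\<open>\<kappa>\<^sub>j = 1\<close> where \<open>u\<^sub>j = 0\<close>).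
Injectivity of \<open>z \<mapsto> exp (B z)\<close> itself is \<open>ker B = {0}\<close>.\<close>

definition vec_exp :: "real^'k \<Rightarrow> real^'k" where
  "vec_exp z = (\<chi> i. exp (z $ i))"

definition vec_ln :: "real^'k \<Rightarrow> real^'k" where
  "vec_ln x = (\<chi> i. ln (x $ i))"

lemma vec_ln_vec_exp [simp]: "vec_ln (vec_exp z) = z"
  by (simp add: vec_exp_def vec_ln_def vec_eq_iff)

lemma inj_vec_exp: "inj vec_exp"
  by (metis injI vec_ln_vec_exp)

lemma range_vec_exp: "range vec_exp = pos_orthant"
proof (intro equalityI subsetI)
  fix x assume "x \<in> pos_orthant"
  then have "x = vec_exp (vec_ln x)"
    by (simp add: vec_exp_def vec_ln_def vec_eq_iff pos_orthant_def)
  then show "x \<in> range vec_exp" by blast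
qed (auto simp: vec_exp_def pos_orthant_def)

lemma monomial_map_vec_exp: "monomial_map B (vec_exp z) = (\<chi> j. exp ((B *v z) $ j))"
proof -
  have "(\<Prod>i\<in>UNIV. exp (z $ i) powr B $ j $ i) = exp ((B *v z) $ j)" for j
  proof -
    have "(\<Prod>i\<in>UNIV. exp (z $ i) powr B $ j $ i) = (\<Prod>i\<in>UNIV. exp (B $ j $ i * z $ i))"
      by (simp add: powr_def mult.commute)
    also have "\<dots> = exp ((B *v z) $ j)"
      by (simp add: exp_sum matrix_vector_mult_def)
    finally show ?thesis .
  qed
  then show ?thesis
    by (simp add: monomial_map_def vec_exp_def vec_eq_iff)
qed

lemma gen_mass_action_vec_exp_eq_iff:
  "gen_mass_action A B \<kappa> (vec_exp a) = gen_mass_action A B \<kappa> (vec_exp b) \<longleftrightarrow>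
     (\<chi> j. \<kappa> $ j * (exp ((B *v a) $ j) - exp ((B *v b) $ j))) \<in> mat_ker A"
proof -
  have "(\<chi> j. \<kappa> $ j * (exp ((B *v a) $ j) - exp ((B *v b) $ j)))
      = (\<chi> j. \<kappa> $ j * exp ((B *v a) $ j)) - (\<chi> j. \<kappa> $ j * exp ((B *v b) $ j))"
    by (simp add: vec_eq_iff algebra_simps)
  then show ?thesis
    by (simp add: gen_mass_action_def monomial_map_vec_exp mat_ker_def
        matrix_vector_mult_diff_distrib)
qed

lemma inj_on_pos_orthant_iff_inj_vec_exp: "inj_on f pos_orthant \<longleftrightarrow> inj (f \<circ> vec_exp)"
  using comp_inj_on_iff[OF inj_vec_exp, of f] by (simp add: range_vec_exp)

lemma vec_exp_eq_if_inj_on_pos_orthant: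
  assumes "inj_on f pos_orthant" "f (vec_exp a) = f (vec_exp b)"
  shows "a = b"
  using assms unfolding inj_on_pos_orthant_iff_inj_vec_exp by (metis comp_apply injD)

lemma sign_vec_eq_0_iff [simp]: "sign_vec u = 0 \<longleftrightarrow> u = 0"
  by (simp add: sign_vec_def vec_eq_iff sgn_0_0)

lemma sign_vec_0 [simp]: "sign_vec 0 = 0"
  by simp

lemma sgn_scaled_exp_diff:
  assumes "k > 0"
  shows "sgn (k * (exp a - exp b)) = sgn (a - b :: real)"
proof -
  have "sgn (exp a - exp b) = sgn (a - b)"
    by (cases a b rule: linorder_cases) (auto simp: sgn_if)
  with assms show ?thesis by (simp add: sgn_mult)
qed

lemma sign_vec_scaled_exp_diff:
  assumes "\<kappa> \<in> pos_orthant"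
  shows "sign_vec (\<chi> j. \<kappa> $ j * (exp (u $ j) - exp (w $ j))) = sign_vec (u - w)"
  using assms by (simp add: sign_vec_def vec_eq_iff pos_orthant_def sgn_scaled_exp_diff)

lemma sgn_eq_imp_scaled_exp_minus_one:
  assumes "sgn a = sgn (b :: real)"
  obtains k where "k > 0" "k * (exp b - 1) = a"
proof (cases "b = 0")
  case True
  with assms show ?thesis by (intro that[of 1]) (auto simp: sgn_0_0)
next
  case False
  with assms have "a / (exp b - 1) > 0"
    by (auto simp: zero_less_divide_iff sgn_if split: if_splits)
  with False show ?thesis by (intro that[of "a / (exp b - 1)"]) auto
qed

lemma sign_vec_eq_imp_scaled_exp_minus_one:
  assumes "sign_vec v = sign_vec u"
  obtains \<kappa> where "\<kappa> \<in> pos_orthant" "(\<chi> j. \<kappa> $ j * (exp (u $ j) - 1)) = v"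
proof -
  have "\<forall>j. \<exists>k > 0. k * (exp (u $ j) - 1) = v $ j"
    using assms sgn_eq_imp_scaled_exp_minus_one
    by (simp add: sign_vec_def vec_eq_iff) metis
  then obtain k where "\<And>j. k j > 0" "\<And>j. k j * (exp (u $ j) - 1) = v $ j"
    by metis
  then show ?thesis
    by (intro that[of "\<chi> j. k j"]) (auto simp: pos_orthant_def vec_eq_iff)
qed

lemma zero_in_sign_vec_ker_inter_im: "0 \<in> sign_vec ` mat_ker A \<inter> sign_vec ` mat_im B"
proof -
  have "sign_vec 0 = 0" "0 \<in> mat_ker A" "0 \<in> mat_im B"
    by (auto simp: mat_ker_def mat_im_def intro: range_eqI[of _ _ 0])
  then show ?thesis by (metis IntI image_eqI)
qed

lemma mat_ker_trivial_if_inj_on_gen_mass_action: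
  assumes "inj_on (gen_mass_action A B \<kappa>) pos_orthant"
  shows "mat_ker B = {0}"
proof -
  have "z = 0" if "B *v z = 0" for z
  proof -
    have "gen_mass_action A B \<kappa> (vec_exp z) = gen_mass_action A B \<kappa> (vec_exp 0)"
      using that by (simp add: gen_mass_action_vec_exp_eq_iff mat_ker_def zero_vec_def[symmetric])
    with assms show "z = 0"
      by (rule vec_exp_eq_if_inj_on_pos_orthant)
  qed
  then show ?thesis by (auto simp: mat_ker_def)
qed

lemma sign_vec_ker_inter_im_trivial_if_inj:
  assumes "\<forall>\<kappa>\<in>pos_orthant. inj_on (gen_mass_action A B \<kappa>) pos_orthant"
  shows "sign_vec ` mat_ker A \<inter> sign_vec ` mat_im B \<subseteq> {0}"
proof
  fix s assume "s \<in> sign_vec ` mat_ker A \<inter> sign_vec ` mat_im B"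
  then obtain v w where v: "v \<in> mat_ker A" and s: "s = sign_vec v" "s = sign_vec (B *v w)"
    by (auto simp: mat_im_def)
  obtain \<kappa> where \<kappa>: "\<kappa> \<in> pos_orthant" and v_eq: "(\<chi> j. \<kappa> $ j * (exp ((B *v w) $ j) - 1)) = v"
    using s sign_vec_eq_imp_scaled_exp_minus_one by metis
  have "gen_mass_action A B \<kappa> (vec_exp w) = gen_mass_action A B \<kappa> (vec_exp 0)"
    using v v_eq by (simp add: gen_mass_action_vec_exp_eq_iff)
  with assms \<kappa> have "w = 0"
    by (blast intro: vec_exp_eq_if_inj_on_pos_orthant)
  then show "s \<in> {0}" using s by simp
qed

lemma inj_on_gen_mass_action:
  assumes "mat_ker B = {0}" "sign_vec ` mat_ker A \<inter> sign_vec ` mat_im B = {0}"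
    and "\<kappa> \<in> pos_orthant"
  shows "inj_on (gen_mass_action A B \<kappa>) pos_orthant"
  unfolding inj_on_pos_orthant_iff_inj_vec_exp
proof (rule injI)
  fix a b assume "(gen_mass_action A B \<kappa> \<circ> vec_exp) a = (gen_mass_action A B \<kappa> \<circ> vec_exp) b"
  then have ker: "(\<chi> j. \<kappa> $ j * (exp ((B *v a) $ j) - exp ((B *v b) $ j))) \<in> mat_ker A"
    by (simp add: gen_mass_action_vec_exp_eq_iff)
  have "sign_vec (B *v (a - b)) = sign_vec (\<chi> j. \<kappa> $ j * (exp ((B *v a) $ j) - exp ((B *v b) $ j)))"
    by (simp add: sign_vec_scaled_exp_diff[OF assms(3)] matrix_vector_mult_diff_distrib)
  then have "sign_vec (B *v (a - b)) \<in> sign_vec ` mat_ker A"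
    using ker by (rule image_eqI)
  moreover have "sign_vec (B *v (a - b)) \<in> sign_vec ` mat_im B"
    by (intro imageI) (simp add: mat_im_def)
  ultimately have "sign_vec (B *v (a - b)) \<in> {0}"
    unfolding assms(2)[symmetric] by (rule IntI)
  then have "a - b \<in> mat_ker B"
    by (simp add: mat_ker_def)
  with assms(1) show "a = b"
    by simp
qed

theorem mainTheorem9:
  fixes A :: "real^'r^'m" and B :: "real^'n^'r"
  shows "(\<forall>\<kappa>\<in>pos_orthant. inj_on (gen_mass_action A B \<kappa>) pos_orthant)
    \<longleftrightarrow> (mat_ker B = {0} \<and> sign_vec ` mat_ker A \<inter> sign_vec ` mat_im B = {0})"
proof
  assume inj: "\<forall>\<kappa>\<in>pos_orthant. inj_on (gen_mass_action A B \<kappa>) pos_orthant"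
  then have "inj_on (gen_mass_action A B (\<chi> j. 1)) pos_orthant"
    by (simp add: pos_orthant_def)
  then have "mat_ker B = {0}"
    by (rule mat_ker_trivial_if_inj_on_gen_mass_action)
  moreover have "sign_vec ` mat_ker A \<inter> sign_vec ` mat_im B = {0}"
    using sign_vec_ker_inter_im_trivial_if_inj[OF inj] zero_in_sign_vec_ker_inter_im
    by (intro subset_antisym) simp_all
  ultimately show "mat_ker B = {0} \<and> sign_vec ` mat_ker A \<inter> sign_vec ` mat_im B = {0}" ..
next
  assume "mat_ker B = {0} \<and> sign_vec ` mat_ker A \<inter> sign_vec ` mat_im B = {0}"
  then show "\<forall>\<kappa>\<in>pos_orthant. inj_on (gen_mass_action A B \<kappa>) pos_orthant"
    by (intro ballI inj_on_gen_mass_action) simp_all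
qed

end
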